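(* Let $p,n\in\mathbb N$ with $p\ge n\ge 10$ and $p=k(n-1)+n-6$ for some $k\in\mathbb N$. Then $$\mathrm{ex}(p;T_n^3)=\frac{(n-2)p-5(n-6)}2.$$
   Context: All graphs are finite simple graphs. For a graph $L$, $\mathrm{ex}(p;L)$ denotes the maximum number of edges in a graph on $p$ vertices that contains no subgraph isomorphic to $L$. For $n\ge 6$, $T_n^3$ is the tree on vertex set $\{v_0,\ldots,v_{n-1}\}$ with edge set $\{v_0v_1,v_0v_2,\ldots,v_0v_{n-4},\ v_1v_{n-3},\ v_1v_{n-2},\ v_1v_{n-1}\}$. $\mathbb N=\{1,2,\ldots\}$. *)

theory Defs
  imports Complex_Main
begin

definition simple_graph_on :: "'a set \<Rightarrow> 'a set set \<Rightarrow> bool" where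
  "simple_graph_on V E \<longleftrightarrow> finite V \<and>
     E \<subseteq> {e. \<exists>u v. u \<in> V \<and> v \<in> V \<and> u \<noteq> v \<and> e = {u, v}}"

definition contains_copy :: "'a set \<Rightarrow> 'a set set \<Rightarrow> 'b set \<Rightarrow> 'b set set \<Rightarrow> bool" where
  "contains_copy V E VL EL \<longleftrightarrow>
     (\<exists>f. inj_on f VL \<and> f ` VL \<subseteq> V \<and> (\<forall>u v. {u, v} \<in> EL \<longrightarrow> {f u, f v} \<in> E))"

definition ex :: "nat \<Rightarrow> 'b set \<Rightarrow> 'b set set \<Rightarrow> nat" where
  "ex p VL EL = Max {card E | E. simple_graph_on {0..<p} E \<and> \<not> contains_copy {0..<p} E VL EL}"

text \<open>The tree T_n^3 on vertices v_0..v_{n-1}, represented as 0..n-1.\<close>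
definition T3_vertices :: "nat \<Rightarrow> nat set" where
  "T3_vertices n = {0..<n}"

definition T3_edges :: "nat \<Rightarrow> nat set set" where
  "T3_edges n = {{0, i} | i. 1 \<le> i \<and> i \<le> n - 4} \<union> {{1, n - 3}, {1, n - 2}, {1, n - 1}}"

end

theory Submission
  imports Defs
begin

text \<open>Call \<open>\<delta>(G) = \<Sum>\<^sub>v (n - 2 - deg v)\<close> the deficiency of a graph \<open>G\<close> on \<open>p\<close> vertices,
  so that \<open>2|E(G)| = (n - 2)p - \<delta>(G)\<close>. By induction on \<open>p\<close>, every \<open>T\<^sub>n\<^sup>3\<close>-free \<open>G\<close>
  satisfies \<open>\<delta>(G) \<ge> \<phi>(p)\<close>, where \<open>\<phi>(p) = min (5r) ((n - 6)(n - 1 - r))\<close> with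
  \<open>r = p mod (n - 1)\<close> is subadditive. The key local fact is that for an edge \<open>vu\<close> with
  \<open>deg v \<ge> n - 4\<close> and \<open>deg u \<ge> 4\<close>, \<open>deg v\<close> plus the number of neighbours of \<open>u\<close> outside
  \<open>N[v]\<close> is at most \<open>n - 2\<close>, since otherwise \<open>T\<^sub>n\<^sup>3\<close> embeds with \<open>v\<^sub>0 = v\<close>, \<open>v\<^sub>1 = u\<close>.
  If some vertex has degree at least \<open>n - 3\<close>, this shows that a vertex \<open>v\<close> of maximum degree
  has a set \<open>S \<supseteq> N[v]\<close> (with at most one extra vertex) whose share of \<open>\<delta>(G)\<close>, counting the
  edges leaving \<open>S\<close> against it, is at least \<open>\<phi>(|S|)\<close>; deleting \<open>S\<close> completes the induction
  step. If all degrees are at most \<open>n - 4\<close>, the bound follows by counting the vertices of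
  degree exactly \<open>n - 4\<close>. For \<open>p \<equiv> n - 6 (mod n - 1)\<close> we have \<open>\<phi>(p) = 5(n - 6)\<close>, attained by
  disjoint cliques \<open>K\<^sub>n\<^sub>-\<^sub>1\<close> together with one \<open>K\<^sub>n\<^sub>-\<^sub>6\<close>.\<close>
definition neighbours :: "'a set set \<Rightarrow> 'a \<Rightarrow> 'a set" where
  "neighbours E v = {u. {v, u} \<in> E}"

definition degree :: "'a set set \<Rightarrow> 'a \<Rightarrow> nat" where
  "degree E v = card (neighbours E v)"

lemma simple_graph_on_finite: "simple_graph_on V E \<Longrightarrow> finite V"
  unfolding simple_graph_on_def by auto

lemma neighbours_subset: "simple_graph_on V E \<Longrightarrow> neighbours E v \<subseteq> V"
  unfolding simple_graph_on_def neighbours_def by (auto simp: doubleton_eq_iff)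

lemma finite_neighbours:
  assumes "simple_graph_on V E"
  shows "finite (neighbours E v)"
  using assms by (meson neighbours_subset simple_graph_on_finite finite_subset)

lemma not_in_neighbours: "simple_graph_on V E \<Longrightarrow> v \<notin> neighbours E v"
  unfolding simple_graph_on_def neighbours_def by (auto simp: doubleton_eq_iff)

lemma neighbours_sym: "u \<in> neighbours E v \<longleftrightarrow> v \<in> neighbours E u"
  unfolding neighbours_def by (simp add: insert_commute)

lemma card_closed_neighbourhood:
  assumes "simple_graph_on V E"
  shows "card (insert v (neighbours E v)) = Suc (degree E v)"
  using not_in_neighbours[OF assms] finite_neighbours[OF assms] by (simp add: degree_def)

lemma degree_less_card:
  assumes "simple_graph_on V E" and "v \<in> V"
  shows "degree E v < card V"
proof -
  have "insert v (neighbours E v) \<subseteq> V"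
    using assms neighbours_subset by fast
  then have "card (insert v (neighbours E v)) \<le> card V"
    by (rule card_mono[OF simple_graph_on_finite[OF assms(1)]])
  then show ?thesis using card_closed_neighbourhood[OF assms(1)] by simp
qed

lemma card_neighbours_Int:
  assumes "finite B"
  shows "card (neighbours E a \<inter> B) = (\<Sum>b\<in>B. if {a, b} \<in> E then 1 else 0)"
proof -
  have "neighbours E a \<inter> B = {b \<in> B. {a, b} \<in> E}"
    unfolding neighbours_def by auto
  then show ?thesis
    using sum.inter_filter[OF assms, of "\<lambda>_. 1::nat" "\<lambda>b. {a, b} \<in> E"] by simp
qed

lemma sum_card_neighbours_Int_commute:
  assumes "finite A" and "finite B"
  shows "(\<Sum>a\<in>A. card (neighbours E a \<inter> B)) = (\<Sum>b\<in>B. card (neighbours E b \<inter> A))"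
proof -
  have "(\<Sum>a\<in>A. card (neighbours E a \<inter> B)) = (\<Sum>a\<in>A. \<Sum>b\<in>B. if {a, b} \<in> E then 1 else 0)"
    using assms(2) by (simp add: card_neighbours_Int)
  also have "\<dots> = (\<Sum>b\<in>B. \<Sum>a\<in>A. if {b, a} \<in> E then 1 else 0)"
    by (subst sum.swap) (simp only: insert_commute)
  also have "\<dots> = (\<Sum>b\<in>B. card (neighbours E b \<inter> A))"
    using assms(1) by (simp add: card_neighbours_Int)
  finally show ?thesis .
qed

lemma sum_degree_eq_twice_card_edges:
  assumes "simple_graph_on V E"
  shows "(\<Sum>v\<in>V. degree E v) = 2 * card E"
proof -
  have finV: "finite V" using assms simple_graph_on_finite by blast
  have E: "E \<subseteq> {{a, b} | a b. a \<in> V \<and> b \<in> V \<and> a \<noteq> b}"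
    using assms unfolding simple_graph_on_def by blast
  then have finE: "finite E"
    using finV finite_subset[of E "Pow V"] by blast
  have "(\<Sum>v\<in>V. degree E v) = (\<Sum>v\<in>V. \<Sum>e\<in>E. if v \<in> e then 1 else 0)"
  proof (rule sum.cong[OF refl])
    fix v assume "v \<in> V"
    have "bij_betw (\<lambda>u. {v, u}) (neighbours E v) {e \<in> E. v \<in> e}"
    proof (rule bij_betwI')
      show "\<And>x y. x \<in> neighbours E v \<Longrightarrow> y \<in> neighbours E v \<Longrightarrow> ({v, x} = {v, y}) = (x = y)"
        by (auto simp: doubleton_eq_iff)
      show "\<And>x. x \<in> neighbours E v \<Longrightarrow> {v, x} \<in> {e \<in> E. v \<in> e}"
        unfolding neighbours_def by simp
      fix e assume e: "e \<in> {e \<in> E. v \<in> e}"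
      then obtain a b where "e = {a, b}" using E by blast
      then have "e = {v, if a = v then b else a}" using e by auto
      then show "\<exists>x\<in>neighbours E v. e = {v, x}" using e unfolding neighbours_def by auto
    qed
    then have "degree E v = card {e \<in> E. v \<in> e}"
      unfolding degree_def by (rule bij_betw_same_card)
    then show "degree E v = (\<Sum>e\<in>E. if v \<in> e then 1 else 0)"
      using sum.inter_filter[OF finE, of "\<lambda>_. 1::nat" "\<lambda>e. v \<in> e"] by simp
  qed
  also have "\<dots> = (\<Sum>e\<in>E. \<Sum>v\<in>V. if v \<in> e then 1 else 0)"
    by (rule sum.swap)
  also have "\<dots> = (\<Sum>e\<in>E. 2)"
  proof (rule sum.cong[OF refl])
    fix e assume "e \<in> E"
    then have "{v \<in> V. v \<in> e} = e" "card e = 2"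
      using E by auto
    then show "(\<Sum>v\<in>V. if v \<in> e then 1 else 0) = (2::nat)"
      using sum.inter_filter[OF finV, of "\<lambda>_. 1::nat" "\<lambda>v. v \<in> e"] by simp
  qed
  finally show ?thesis by simp
qed

lemma contains_T3_if_leaves:
  assumes sg: "simple_graph_on V E" and n: "n \<ge> 6" and e: "{v0, v1} \<in> E"
    and A: "A \<subseteq> neighbours E v0 - {v1}" "card A = n - 5"
    and B: "B \<subseteq> neighbours E v1 - {v0}" "card B = 3"
    and AB: "A \<inter> B = {}"
  shows "contains_copy V E (T3_vertices n) (T3_edges n)"
proof -
  have "finite A" "finite B"
    using A(1) B(1) finite_neighbours[OF sg] by (auto intro: finite_subset)
  then obtain hA hB where hA: "bij_betw hA {2..<n-3} A" and hB: "bij_betw hB {n-3..<n} B"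
    using A(2) B(2) n finite_same_card_bij[of "{2..<n-3}" A] finite_same_card_bij[of "{n-3..<n}" B]
    by auto
  define f where
    "f i = (if i = 0 then v0 else if i = 1 then v1 else if i < n - 3 then hA i else hB i)" for i
  have f01: "f 0 = v0" "f 1 = v1" "f (Suc 0) = v1"
    by (simp_all add: f_def)
  have v01: "v0 \<noteq> v1" "v0 \<notin> A \<union> B" "v1 \<notin> A \<union> B"
    using e A(1) B(1) not_in_neighbours[OF sg] by (auto simp: neighbours_def)
  have "bij_betw f {0, 1} {v0, v1}"
    using v01(1) by (auto simp: bij_betw_def f_def)
  moreover have "bij_betw f {2..<n-3} A"
    using hA by (rule bij_betw_cong[THEN iffD2, rotated]) (simp add: f_def)
  moreover have "bij_betw f {n-3..<n} B"
    using hB n by (subst bij_betw_cong[of _ _ hB]) (auto simp: f_def)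
  ultimately have "bij_betw f ({0, 1} \<union> {2..<n-3} \<union> {n-3..<n}) ({v0, v1} \<union> A \<union> B)"
    using v01 AB by (intro bij_betw_combine) auto
  moreover have "{0, 1} \<union> {2..<n-3} \<union> {n-3..<n} = {0..<n}"
    using n by auto
  ultimately have f: "bij_betw f {0..<n} ({v0, v1} \<union> A \<union> B)"
    by simp
  have "{v0, v1} \<union> A \<union> B \<subseteq> V"
    using e A(1) B(1) neighbours_subset[OF sg] sg unfolding simple_graph_on_def
    by (auto simp: doubleton_eq_iff)
  moreover have "{f u, f w} \<in> E" if "{u, w} \<in> T3_edges n" for u w
  proof -
    have root: "{f 0, f i} \<in> E" if "1 \<le> i" "i \<le> n - 4" for i
    proof (cases "i = 1")
      case False
      then have "f i \<in> A" using that n bij_betwE[OF hA] by (auto simp: f_def)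
      then show ?thesis using A(1) by (auto simp: f01 neighbours_def)
    qed (use e in \<open>simp add: f01\<close>)
    have leaf: "{f 1, f i} \<in> E" if "n - 3 \<le> i" "i < n" for i
    proof -
      have "f i = hB i" using that n by (auto simp: f_def)
      then have "f i \<in> B" using that bij_betwE[OF hB] by simp
      then show ?thesis using B(1) by (auto simp: f01 neighbours_def)
    qed
    then have leaves: "{f 1, f (n-3)} \<in> E" "{f 1, f (n-2)} \<in> E" "{f 1, f (n-1)} \<in> E"
      using n by auto
    have "(\<exists>i. 1 \<le> i \<and> i \<le> n - 4 \<and> {u, w} = {0, i}) \<or>
        {u, w} = {1, n-3} \<or> {u, w} = {1, n-2} \<or> {u, w} = {1, n-1}"
      using that unfolding T3_edges_def by blast
    moreover have img: "{f u, f w} = {f a, f b}" if "{u, w} = {a, b}" for a b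
      using that by (metis image_insert image_empty)
    ultimately show ?thesis
    proof (elim disjE exE conjE)
      fix i assume "1 \<le> i" "i \<le> n - 4" "{u, w} = {0, i}"
      then show ?thesis using root[of i] img[of 0 i] by simp
    qed (use leaves img in simp_all)
  qed
  ultimately show ?thesis
    unfolding contains_copy_def T3_vertices_def using f
    by (intro exI[of _ f]) (auto simp: bij_betw_def)
qed

lemma obtain_subset_with_card_covering:
  assumes "finite Y" "X \<subseteq> Y" "k \<le> card Y"
  obtains B where "B \<subseteq> Y" "card B = k" "card (B - X) = k - card X"
proof (cases "k \<le> card X")
  case True
  then obtain B where B: "B \<subseteq> X" "card B = k"
    by (meson obtain_subset_with_card_n)
  then have "card (B - X) = 0"
    by (metis Diff_eq_empty_iff card.empty)
  then have "card (B - X) = k - card X" using True by simp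
  with B assms(2) show ?thesis
    by (intro that[of B]) auto
next
  case False
  have finX: "finite X" using assms(1,2) finite_subset by blast
  have "k - card X \<le> card (Y - X)"
    using assms card_Diff_subset[OF finX assms(2)] by linarith
  then obtain C where C: "C \<subseteq> Y - X" "card C = k - card X"
    by (meson obtain_subset_with_card_n)
  have "finite C" using C(1) assms(1) finite_subset by blast
  then have "card (X \<union> C) = k"
    using C False finX by (subst card_Un_disjoint) auto
  moreover have "X \<union> C - X = C" using C(1) by blast
  ultimately show ?thesis
    using C assms(2) by (intro that[of "X \<union> C"]) auto
qed

lemma T3_free_card_neighbours_outside:
  assumes sg: "simple_graph_on V E" and tf: "\<not> contains_copy V E (T3_vertices n) (T3_edges n)"
    and n: "n \<ge> 6" and u: "u \<in> neighbours E v"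
    and dv: "degree E v \<ge> n - 4" and du: "degree E u \<ge> 4"
    and S: "insert v (neighbours E v) \<subseteq> S"
  shows "card (neighbours E u - S) + degree E v \<le> n - 2"
proof (rule ccontr)
  txt \<open>Otherwise \<open>v\<close> and \<open>u\<close> serve as \<open>v\<^sub>0\<close> and \<open>v\<^sub>1\<close>: the three leaves at \<open>u\<close> are taken
    outside \<open>N[v]\<close> as far as possible, which leaves room for \<open>n - 5\<close> leaves at \<open>v\<close>.\<close>
  define X where "X = neighbours E u - insert v (neighbours E v)"
  have fin: "finite (neighbours E w)" for w
    using finite_neighbours[OF sg] .
  have "card (neighbours E u - S) \<le> card X"
    unfolding X_def using S fin by (intro card_mono) auto
  moreover assume "\<not> card (neighbours E u - S) + degree E v \<le> n - 2"
  ultimately have X: "card X + degree E v \<ge> n - 1"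
    by linarith
  have vu: "v \<in> neighbours E u"
    using u neighbours_sym by metis
  have "card (neighbours E u - {v}) = degree E u - 1"
    using vu fin by (simp add: degree_def)
  then have three: "3 \<le> card (neighbours E u - {v})"
    using du by linarith
  have "X \<subseteq> neighbours E u - {v}"
    unfolding X_def by blast
  then obtain B where B: "B \<subseteq> neighbours E u - {v}" "card B = 3" "card (B - X) = 3 - card X"
    by (rule obtain_subset_with_card_covering[OF finite_Diff[OF fin] _ three])
  have "card (neighbours E v - {u}) - card (B - X) \<le> card (neighbours E v - {u} - (B - X))"
    using fin B(1) by (intro diff_card_le_card_Diff) (auto intro: finite_subset)
  also have "\<dots> \<le> card (neighbours E v - {u} - B)"
    unfolding X_def using fin by (intro card_mono) auto
  finally have "card (neighbours E v - {u}) - card (B - X) \<le> card (neighbours E v - {u} - B)" .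
  moreover have "card (neighbours E v - {u}) = degree E v - 1"
    using u fin by (simp add: degree_def)
  ultimately have "n - 5 \<le> card (neighbours E v - {u} - B)"
    using B(3) X dv by linarith
  then obtain A where A: "A \<subseteq> neighbours E v - {u} - B" "card A = n - 5"
    by (meson obtain_subset_with_card_n)
  have "{v, u} \<in> E"
    using u by (simp add: neighbours_def)
  then have "contains_copy V E (T3_vertices n) (T3_edges n)"
    using A B n by (intro contains_T3_if_leaves[OF sg n, of v u A B]) auto
  with tf show False ..
qed

lemma card_neighbours_outside_less_degree:
  assumes sg: "simple_graph_on V E" and u: "u \<in> neighbours E v" and "v \<in> S"
  shows "card (neighbours E u - S) < degree E u"
proof -
  have "v \<in> neighbours E u" "v \<notin> neighbours E u - S"
    using u assms(3) by (auto simp: neighbours_sym)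
  then show ?thesis
    unfolding degree_def using finite_neighbours[OF sg] by (intro psubset_card_mono) auto
qed

definition delete_vertices :: "'a set set \<Rightarrow> 'a set \<Rightarrow> 'a set set" where
  "delete_vertices E S = {e \<in> E. e \<inter> S = {}}"

lemma simple_graph_on_delete_vertices:
  "simple_graph_on V E \<Longrightarrow> simple_graph_on (V - S) (delete_vertices E S)"
  unfolding simple_graph_on_def delete_vertices_def by blast

lemma contains_copy_delete_vertices:
  assumes "contains_copy (V - S) (delete_vertices E S) VL EL"
  shows "contains_copy V E VL EL"
proof -
  obtain f where "inj_on f VL" "f ` VL \<subseteq> V - S"
      "\<forall>u v. {u, v} \<in> EL \<longrightarrow> {f u, f v} \<in> delete_vertices E S"
    using assms unfolding contains_copy_def by blast
  then show ?thesis
    unfolding contains_copy_def delete_vertices_def by (intro exI[of _ f]) blast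
qed

lemma neighbours_delete_vertices:
  "w \<notin> S \<Longrightarrow> neighbours (delete_vertices E S) w = neighbours E w - S"
  unfolding neighbours_def delete_vertices_def by auto

definition deficiency :: "nat \<Rightarrow> 'a set set \<Rightarrow> 'a set \<Rightarrow> int" where
  "deficiency n E V = (\<Sum>v\<in>V. int n - 2 - int (degree E v))"

lemma deficiency_split:
  assumes "finite V" "B \<subseteq> V"
  shows "deficiency n E V = deficiency n E (V - B) + deficiency n E B"
  unfolding deficiency_def using sum.subset_diff[OF assms(2,1)] .

lemma deficiency_ge_if_degree_le:
  assumes "\<forall>u\<in>V. degree E u \<le> d"
  shows "int (card V) * (int n - 2 - int d) \<le> deficiency n E V"
proof -
  have "(\<Sum>v\<in>V. int n - 2 - int d) \<le> deficiency n E V"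
    unfolding deficiency_def using assms by (intro sum_mono) auto
  then show ?thesis
    by (simp add: mult.commute)
qed

lemma deficiency_eq_card_edges:
  assumes "simple_graph_on V E"
  shows "deficiency n E V = int (card V) * (int n - 2) - 2 * int (card E)"
proof -
  have "deficiency n E V = int (card V) * (int n - 2) - int (\<Sum>v\<in>V. degree E v)"
    unfolding deficiency_def by (simp add: sum_subtractf)
  then show ?thesis
    using sum_degree_eq_twice_card_edges[OF assms] by simp
qed

text \<open>Deleting \<open>S\<close> lowers the deficiency by \<open>local_deficiency n E S\<close>: the edges between \<open>S\<close>
  and the rest raise the deficiency of the remaining graph, so they are charged to \<open>S\<close>.\<close>
definition slack :: "nat \<Rightarrow> 'a set set \<Rightarrow> 'a set \<Rightarrow> 'a \<Rightarrow> int" where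
  "slack n E S u = int n - 2 - int (degree E u) - int (card (neighbours E u - S))"

definition local_deficiency :: "nat \<Rightarrow> 'a set set \<Rightarrow> 'a set \<Rightarrow> int" where
  "local_deficiency n E S = (\<Sum>u\<in>S. slack n E S u)"

lemma deficiency_eq_local_deficiency_plus_rest:
  assumes sg: "simple_graph_on V E" and S: "S \<subseteq> V"
  shows "deficiency n E V = local_deficiency n E S + deficiency n (delete_vertices E S) (V - S)"
proof -
  have finV: "finite V" using sg simple_graph_on_finite by blast
  have finS: "finite S" using S finV finite_subset by blast
  have degree_rest: "degree E w = degree (delete_vertices E S) w + card (neighbours E w \<inter> S)"
    if "w \<notin> S" for w
    unfolding degree_def neighbours_delete_vertices[OF that]
    using card_Int_Diff[OF finite_neighbours[OF sg]] by (metis add.commute)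
  have "(\<Sum>w\<in>V - S. card (neighbours E w \<inter> S)) = (\<Sum>u\<in>S. card (neighbours E u \<inter> (V - S)))"
    using finV finS by (intro sum_card_neighbours_Int_commute) auto
  also have "\<dots> = (\<Sum>u\<in>S. card (neighbours E u - S))"
    using neighbours_subset[OF sg] by (intro sum.cong) (auto intro: arg_cong[where f = card])
  finally have edges_between:
    "(\<Sum>w\<in>V - S. int (card (neighbours E w \<inter> S))) = (\<Sum>u\<in>S. int (card (neighbours E u - S)))"
    by (metis of_nat_sum)
  have "deficiency n E V = deficiency n E S + deficiency n E (V - S)"
    using deficiency_split[OF finV S] by simp
  also have "deficiency n E (V - S) = deficiency n (delete_vertices E S) (V - S)
      - (\<Sum>w\<in>V - S. int (card (neighbours E w \<inter> S)))"
    unfolding deficiency_def sum_subtractf[symmetric] using degree_rest by (intro sum.cong) auto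
  also have "deficiency n E S = local_deficiency n E S + (\<Sum>u\<in>S. int (card (neighbours E u - S)))"
    unfolding deficiency_def local_deficiency_def slack_def sum.distrib[symmetric]
    by (intro sum.cong) auto
  finally show ?thesis
    using edges_between by linarith
qed


lemma min_mod_subadditive:
  fixes a c m x y :: nat
  assumes "m > 0"
  defines "g z \<equiv> min (a * (z mod m)) (c * (m - z mod m))"
  shows "g (x + y) \<le> g x + g y"
proof -
  define r s where "r = x mod m" and "s = y mod m"
  have rs: "r < m" "s < m"
    using assms(1) by (simp_all add: r_def s_def)
  have gxy: "g x + g y = min (a * r) (c * (m - r)) + min (a * s) (c * (m - s))"
    by (simp add: g_def r_def s_def)
  have "g (x + y) = min (a * ((r + s) mod m)) (c * (m - (r + s) mod m))"
    by (simp add: g_def r_def s_def mod_add_eq)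
  also have "\<dots> \<le> min (a * r) (c * (m - r)) + min (a * s) (c * (m - s))"
  proof (cases "r + s < m")
    case True
    have "c * (m - (r + s)) \<le> c * (m - r)" "c * (m - (r + s)) \<le> c * (m - s)"
      by (intro mult_le_mono2; linarith)+
    then have "min (a * r + a * s) (c * (m - (r + s)))
        \<le> min (a * r) (c * (m - r)) + min (a * s) (c * (m - s))"
      by (simp only: min_def split: if_splits) linarith+
    then show ?thesis
      using True by (simp only: mod_less add_mult_distrib2)
  next
    case False
    have "a * (r + s - m) \<le> a * r" "a * (r + s - m) \<le> a * s"
      using rs by (intro mult_le_mono2; linarith)+
    moreover have "c * (m - (r + s - m)) = c * (m - r) + c * (m - s)"
      using rs False by (simp add: add_mult_distrib2[symmetric])
    ultimately have "min (a * (r + s - m)) (c * (m - (r + s - m)))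
        \<le> min (a * r) (c * (m - r)) + min (a * s) (c * (m - s))"
      by (simp only: min_def split: if_splits) linarith+
    moreover have "(r + s) mod m = r + s - m"
      using rs False by (simp add: mod_if)
    ultimately show ?thesis
      by simp
  qed
  finally show ?thesis
    unfolding gxy .
qed

text \<open>At
  \<open>x = k(n - 1) + n - 6\<close> it is \<open>5(n - 6)\<close>, the deficiency of \<open>k\<close> disjoint copies of
  \<open>K\<^sub>n\<^sub>-\<^sub>1\<close> and one \<open>K\<^sub>n\<^sub>-\<^sub>6\<close>.\<close>
definition min_deficiency :: "nat \<Rightarrow> nat \<Rightarrow> nat" where
  "min_deficiency n x = min (5 * (x mod (n - 1))) ((n - 6) * (n - 1 - x mod (n - 1)))"

lemma min_deficiency_add_le:
  "n \<ge> 2 \<Longrightarrow> min_deficiency n (x + y) \<le> min_deficiency n x + min_deficiency n y"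
  unfolding min_deficiency_def by (rule min_mod_subadditive) simp

lemma min_deficiency_le_mod: "min_deficiency n x \<le> 5 * (x mod (n - 1))"
  by (simp add: min_deficiency_def)

lemma min_deficiency_le_complement: "min_deficiency n x \<le> (n - 6) * (n - 1 - x mod (n - 1))"
  by (simp add: min_deficiency_def)

lemma min_deficiency_le: "n \<ge> 6 \<Longrightarrow> min_deficiency n x \<le> 5 * (n - 6)"
proof (cases "x mod (n - 1) \<le> n - 6")
  case True
  then show ?thesis
    using min_deficiency_le_mod[of n x] by linarith
next
  case False
  then have "(n - 6) * (n - 1 - x mod (n - 1)) \<le> (n - 6) * 5"
    by (intro mult_le_mono2) linarith
  then show ?thesis
    using min_deficiency_le_complement[of n x] by linarith
qed

lemma min_deficiency_residue:
  assumes "n \<ge> 6"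
  shows "min_deficiency n (k * (n - 1) + n - 6) = 5 * (n - 6)"
proof -
  have "k * (n - 1) + n - 6 = (n - 6) + k * (n - 1)"
    using assms by simp
  then have "(k * (n - 1) + n - 6) mod (n - 1) = n - 6"
    using assms by (simp only: mod_mult_self1) simp
  then show ?thesis
    using assms by (simp add: min_deficiency_def)
qed

lemma min_deficiency_small:
  assumes "n \<ge> 6" "x < n"
  shows "min_deficiency n x \<le> x * (n - 1 - x)"
proof (cases "x = n - 1")
  case False
  then have x: "x mod (n - 1) = x"
    using assms by simp
  show ?thesis
  proof (cases "x \<le> n - 6")
    case True
    then have "5 * x \<le> x * (n - 1 - x)"
      using assms by (subst mult.commute, intro mult_le_mono1) linarith
    then show ?thesis
      using min_deficiency_le_mod[of n x, unfolded x] by linarith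
  next
    case False
    then have "(n - 6) * (n - 1 - x) \<le> x * (n - 1 - x)"
      by (intro mult_le_mono1) linarith
    then show ?thesis
      using min_deficiency_le_complement[of n x, unfolded x] by linarith
  qed
qed (simp add: min_deficiency_def)

lemma mod_eq_diff_if_less_double:
  fixes x m :: nat
  assumes "m \<le> x" "x < 2 * m"
  shows "x mod m = x - m"
proof -
  have "x mod m = (x - m) mod m"
    using assms(1) by (rule le_mod_geq)
  also have "\<dots> = x - m"
    using assms by (intro mod_less) linarith
  finally show ?thesis .
qed

lemma min_deficiency_middle:
  assumes "n \<ge> 6" "n \<le> x" "x < 2 * n - 2"
  shows "min_deficiency n x \<le> 5 * (x - (n - 1))"
proof -
  have "x mod (n - 1) = x - (n - 1)"
    using assms by (intro mod_eq_diff_if_less_double) linarith+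
  then show ?thesis
    using min_deficiency_le_mod[of n x] by simp
qed

lemma min_deficiency_large:
  assumes "n \<ge> 10" "x \<ge> 2 * n - 6"
  shows "min_deficiency n x \<le> 2 * x"
proof (cases "x \<ge> 2 * (n - 1)")
  case True
  have "2 \<le> x div (n - 1)"
    using True assms by (simp add: less_eq_div_iff_mult_less_eq)
  then have "x mod (n - 1) + 2 * (n - 1) \<le> x"
    using mod_div_mult_eq[of x "n - 1"] by (metis add_left_mono mult_le_mono1)
  moreover have "x mod (n - 1) < n - 1"
    using assms by simp
  ultimately show ?thesis
    using min_deficiency_le_mod[of n x] by linarith
next
  case False
  then have "x mod (n - 1) = x - (n - 1)"
    using assms by (intro mod_eq_diff_if_less_double) linarith+
  then have "n - 1 - x mod (n - 1) \<le> 4"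
    using assms by linarith
  then have "(n - 6) * (n - 1 - x mod (n - 1)) \<le> (n - 6) * 4"
    by (rule mult_le_mono2)
  then show ?thesis
    using assms min_deficiency_le_complement[of n x] by linarith
qed

lemma min_deficiency_n_minus_1: "min_deficiency n (n - 1) = 0"
  by (simp add: min_deficiency_def)

lemma min_deficiency_n_minus_2: "n \<ge> 3 \<Longrightarrow> min_deficiency n (n - 2) \<le> n - 6"
  using min_deficiency_le_complement[of n "n - 2"] by simp

lemma sum_closed_neighbourhood:
  assumes "simple_graph_on V E"
  shows "(\<Sum>u\<in>insert v (neighbours E v). f u) = f v + (\<Sum>u\<in>neighbours E v. f u)"
  using not_in_neighbours[OF assms] finite_neighbours[OF assms] by simp

lemma slack_centre:
  "insert v (neighbours E v) \<subseteq> S \<Longrightarrow> slack n E S v = int n - 2 - int (degree E v)"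
  unfolding slack_def by (simp add: Diff_eq_empty_iff[THEN iffD2])

lemma slack_low_degree_neighbour:
  assumes "simple_graph_on V E" "u \<in> neighbours E v" "v \<in> S"
  shows "slack n E S u \<ge> int n - 1 - 2 * int (degree E u)"
  using card_neighbours_outside_less_degree[OF assms] unfolding slack_def by linarith

lemma slack_high_degree_neighbour:
  assumes sg: "simple_graph_on V E" and tf: "\<not> contains_copy V E (T3_vertices n) (T3_edges n)"
    and n: "n \<ge> 6" and u: "u \<in> neighbours E v"
    and dv: "degree E v \<ge> n - 4" and du: "degree E u \<ge> 4"
    and S: "insert v (neighbours E v) \<subseteq> S"
  shows "slack n E S u \<ge> int (degree E v) - int (degree E u)"
  using T3_free_card_neighbours_outside[OF assms] n unfolding slack_def by linarith

lemma local_deficiency_if_degree_ge: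
  assumes sg: "simple_graph_on V E" and tf: "\<not> contains_copy V E (T3_vertices n) (T3_edges n)"
    and n: "n \<ge> 9" and dv: "degree E v \<ge> n - 1"
  shows "5 * (int n - 6) \<le> local_deficiency n E (insert v (neighbours E v))"
proof -
  let ?S = "insert v (neighbours E v)"
  have "int n - 7 \<le> slack n E ?S u" if u: "u \<in> neighbours E v" for u
  proof -
    have "degree E u \<le> 3"
      using T3_free_card_neighbours_outside[OF sg tf _ u _ _ subset_refl] n dv by fastforce
    then show ?thesis
      using slack_low_degree_neighbour[OF sg u insertI1, of n "neighbours E v"] by simp
  qed
  then have "int (degree E v) * (int n - 7) \<le> (\<Sum>u\<in>neighbours E v. slack n E ?S u)"
    using sum_mono[of "neighbours E v" "\<lambda>_. int n - 7"] by (simp add: degree_def)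
  moreover have "(int n - 1) * (int n - 8) \<le> int (degree E v) * (int n - 8)"
    using dv n by (intro mult_right_mono) auto
  moreover have
    "(int n - 1) * (int n - 8) + int n - 2 - 5 * (int n - 6) = (int n - 4) * (int n - 9)"
    by (simp add: algebra_simps)
  moreover have "(int n - 4) * (int n - 9) \<ge> 0"
    using n by simp
  ultimately show ?thesis
    unfolding local_deficiency_def sum_closed_neighbourhood[OF sg] slack_centre[OF subset_refl]
    by (simp add: algebra_simps)
qed

lemma local_deficiency_if_degree_eq_n_minus_2:
  assumes sg: "simple_graph_on V E" and tf: "\<not> contains_copy V E (T3_vertices n) (T3_edges n)"
    and n: "n \<ge> 7" and D: "\<forall>u\<in>V. degree E u \<le> n - 2" and dv: "degree E v = n - 2"
  shows "0 \<le> local_deficiency n E (insert v (neighbours E v))"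
proof -
  let ?S = "insert v (neighbours E v)"
  have "0 \<le> slack n E ?S u" if u: "u \<in> neighbours E v" for u
  proof (cases "degree E u \<ge> 4")
    case True
    have "degree E u \<le> n - 2"
      using D u neighbours_subset[OF sg] by blast
    then show ?thesis
      using slack_high_degree_neighbour[OF sg tf _ u _ True subset_refl] n dv by linarith
  next
    case False
    then show ?thesis
      using slack_low_degree_neighbour[OF sg u insertI1, of n "neighbours E v"] n by linarith
  qed
  then show ?thesis
    unfolding local_deficiency_def sum_closed_neighbourhood[OF sg] slack_centre[OF subset_refl]
    using dv n by (simp add: sum_nonneg)
qed

lemma local_deficiency_extended_if_degree_eq_n_minus_3:
  assumes sg: "simple_graph_on V E" and tf: "\<not> contains_copy V E (T3_vertices n) (T3_edges n)"
    and n: "n \<ge> 8" and D: "\<forall>w\<in>V. degree E w \<le> n - 3" and dv: "degree E v = n - 3"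
    and u: "u \<in> neighbours E v" and du: "degree E u \<ge> n - 4"
    and x: "x \<in> neighbours E u" "x \<notin> insert v (neighbours E v)"
  shows "0 \<le> local_deficiency n E (insert x (insert v (neighbours E v)))"
proof -
  let ?S = "insert x (insert v (neighbours E v))"
  have S: "insert v (neighbours E v) \<subseteq> ?S"
    by blast
  have n6: "n \<ge> 6"
    using n by simp
  have degree_le: "degree E w \<le> n - 3" if "w \<in> neighbours E y" for w y
    using D that neighbours_subset[OF sg] by blast
  have "0 \<le> slack n E ?S w" if w: "w \<in> neighbours E v" for w
  proof (cases "degree E w \<ge> 4")
    case True
    then show ?thesis
      using slack_high_degree_neighbour[OF sg tf _ w _ True S] degree_le[OF w] n dv by linarith
  next
    case False
    then show ?thesis
      using slack_low_degree_neighbour[OF sg w, of ?S n] n by simp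
  qed
  then have "0 \<le> (\<Sum>w\<in>neighbours E v. slack n E ?S w)"
    by (rule sum_nonneg)
  moreover have "-1 \<le> slack n E ?S x"
  proof (cases "degree E x \<ge> 4")
    case True
    have "4 \<le> degree E u" "n - 4 \<le> degree E v" "6 \<le> n"
      using du dv n by linarith+
    then have "card (neighbours E u - insert v (neighbours E v)) \<le> 1"
      using T3_free_card_neighbours_outside[OF sg tf _ u, of "insert v (neighbours E v)"] dv by simp
    then have "neighbours E u - insert v (neighbours E v) \<subseteq> {x}"
      using x finite_neighbours[OF sg, of u] by (auto simp: card_le_Suc0_iff_eq)
    then have "insert u (neighbours E u) \<subseteq> ?S"
      using u by blast
    from slack_high_degree_neighbour[OF sg tf n6 x(1) du True this] show ?thesis
      using degree_le[OF x(1)] n du by linarith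
  next
    case False
    then show ?thesis
      using slack_low_degree_neighbour[OF sg x(1), of ?S n] u n by simp
  qed
  moreover have "slack n E ?S v = 1"
    using slack_centre[OF S] dv n by simp
  ultimately show ?thesis
    unfolding local_deficiency_def
    using x(2) finite_neighbours[OF sg] by (simp add: sum_closed_neighbourhood[OF sg])
qed

lemma local_deficiency_if_degree_eq_n_minus_3:
  assumes sg: "simple_graph_on V E" and tf: "\<not> contains_copy V E (T3_vertices n) (T3_edges n)"
    and n: "n \<ge> 8" and D: "\<forall>w\<in>V. degree E w \<le> n - 3" and dv: "degree E v = n - 3"
    and closed: "\<forall>u\<in>neighbours E v. degree E u \<ge> n - 4 \<longrightarrow> neighbours E u \<subseteq> insert v (neighbours E v)"
  shows "int n - 2 \<le> local_deficiency n E (insert v (neighbours E v))"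
proof -
  let ?S = "insert v (neighbours E v)"
  have n6: "n \<ge> 6" and dv4: "degree E v \<ge> n - 4"
    using n dv by simp_all
  have "1 \<le> slack n E ?S u" if u: "u \<in> neighbours E v" for u
  proof -
    consider "degree E u \<ge> n - 4" | "4 \<le> degree E u" "degree E u < n - 4" | "degree E u < 4"
      by linarith
    then show ?thesis
    proof cases
      case 1
      then have "card (neighbours E u - ?S) = 0"
        using closed u by (metis Diff_eq_empty_iff card.empty)
      moreover have "degree E u \<le> n - 3"
        using D u neighbours_subset[OF sg] by blast
      ultimately show ?thesis
        using n by (simp add: slack_def)
    next
      case 2
      then show ?thesis
        using slack_high_degree_neighbour[OF sg tf n6 u dv4 2(1) subset_refl] dv by simp
    next
      case 3
      then show ?thesis
        using slack_low_degree_neighbour[OF sg u insertI1, of n "neighbours E v"] n by simp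
    qed
  qed
  then have "int (degree E v) \<le> (\<Sum>u\<in>neighbours E v. slack n E ?S u)"
    using sum_mono[of "neighbours E v" "\<lambda>_. 1::int"] by (simp add: degree_def)
  then show ?thesis
    unfolding local_deficiency_def sum_closed_neighbourhood[OF sg] slack_centre[OF subset_refl]
    using dv n by linarith
qed

lemma T3_free_reducible:
  assumes sg: "simple_graph_on V E" and tf: "\<not> contains_copy V E (T3_vertices n) (T3_edges n)"
    and n: "n \<ge> 10" and v: "v \<in> V" "degree E v \<ge> n - 3"
  obtains S where "S \<subseteq> V" "S \<noteq> {}" "int (min_deficiency n (card S)) \<le> local_deficiency n E S"
proof -
  have n6: "n \<ge> 6" and n7: "n \<ge> 7" and n8: "n \<ge> 8" and n9: "n \<ge> 9"
    using n by simp_all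
  have fin: "finite (degree E ` V)"
    using simple_graph_on_finite[OF sg] by simp
  moreover have "degree E ` V \<noteq> {}"
    using v by blast
  ultimately obtain w where w: "w \<in> V" "degree E w = Max (degree E ` V)"
    by (metis Max_in imageE)
  then have D: "\<forall>u\<in>V. degree E u \<le> degree E w"
    using fin by simp
  then have dw: "degree E w \<ge> n - 3"
    using v by (meson le_trans)
  let ?S = "insert w (neighbours E w)"
  have S: "?S \<subseteq> V" "?S \<noteq> {}"
    using w neighbours_subset[OF sg] by auto
  have card_S: "card ?S = Suc (degree E w)"
    by (rule card_closed_neighbourhood[OF sg])
  consider "degree E w \<ge> n - 1" | "degree E w = n - 2" | "degree E w = n - 3"
    using dw by linarith
  then show ?thesis
  proof cases
    case 1
    have "int (min_deficiency n (card ?S)) \<le> 5 * (int n - 6)"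
      using min_deficiency_le[OF n6, of "card ?S"] n by (simp add: of_nat_diff)
    also have "\<dots> \<le> local_deficiency n E ?S"
      using local_deficiency_if_degree_ge[OF sg tf n9 1] by simp
    finally show ?thesis
      using S that by blast
  next
    case 2
    then have "card ?S = n - 1"
      using card_S n by simp
    then have "min_deficiency n (card ?S) = 0"
      using min_deficiency_n_minus_1 by simp
    moreover have "0 \<le> local_deficiency n E ?S"
      using local_deficiency_if_degree_eq_n_minus_2[OF sg tf n7 _ 2] D 2 by simp
    ultimately show ?thesis
      using S that[of ?S] by simp
  next
    case 3
    then have D3: "\<forall>u\<in>V. degree E u \<le> n - 3"
      using D by simp
    show ?thesis
    proof (cases "\<exists>u\<in>neighbours E w. degree E u \<ge> n - 4 \<and> \<not> neighbours E u \<subseteq> ?S")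
      case True
      then obtain u x where u: "u \<in> neighbours E w" "degree E u \<ge> n - 4"
        and x: "x \<in> neighbours E u" "x \<notin> ?S"
        by blast
      have "card (insert x ?S) = n - 1"
        using card_S x(2) 3 n finite_neighbours[OF sg] by simp
      moreover have "insert x ?S \<subseteq> V"
        using S x(1) neighbours_subset[OF sg] by blast
      ultimately show ?thesis
        using local_deficiency_extended_if_degree_eq_n_minus_3[OF sg tf n8 D3 3 u x]
          min_deficiency_n_minus_1[of n] that[of "insert x ?S"] by simp
    next
      case False
      have "card ?S = n - 2"
        using card_S 3 n by simp
      then have "int (min_deficiency n (card ?S)) \<le> int n - 6"
        using min_deficiency_n_minus_2[of n] n by simp
      also have "\<dots> \<le> local_deficiency n E ?S"
        using local_deficiency_if_degree_eq_n_minus_3[OF sg tf n8 D3 3] False by simp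
      finally show ?thesis
        using S that by blast
    qed
  qed
qed

lemma degree_common_neighbour_le:
  assumes sg: "simple_graph_on V E" and tf: "\<not> contains_copy V E (T3_vertices n) (T3_edges n)"
    and n: "n \<ge> 6" and dv: "degree E v = n - 4" and dw: "degree E w = n - 4"
    and vw: "w \<notin> insert v (neighbours E v)"
    and u: "u \<in> neighbours E v \<inter> neighbours E w"
  shows "degree E u \<le> card (neighbours E v \<inter> neighbours E w) + 3"
proof (cases "degree E u \<ge> 4")
  case True
  let ?I = "neighbours E v \<inter> neighbours E w"
  have fin: "finite (neighbours E x)" for x
    using finite_neighbours[OF sg] .
  have cv: "card (neighbours E u - insert v (neighbours E v)) \<le> 2"
    using T3_free_card_neighbours_outside[OF sg tf n _ _ True subset_refl] u dv by fastforce
  have cw: "card (neighbours E u - insert w (neighbours E w)) \<le> 2"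
    using T3_free_card_neighbours_outside[OF sg tf n _ _ True subset_refl] u dw by fastforce
  have "v \<notin> neighbours E w"
    using vw neighbours_sym by fast
  then have "neighbours E u \<subseteq> (neighbours E u - insert v (neighbours E v))
      \<union> (neighbours E u - insert w (neighbours E w)) \<union> (?I - {u})"
    using vw not_in_neighbours[OF sg, of u] by blast
  then have "degree E u \<le> card ((neighbours E u - insert v (neighbours E v))
      \<union> (neighbours E u - insert w (neighbours E w)) \<union> (?I - {u}))"
    unfolding degree_def using fin by (intro card_mono) auto
  also have "\<dots> \<le> card (neighbours E u - insert v (neighbours E v))
      + card (neighbours E u - insert w (neighbours E w)) + card (?I - {u})"
    by (meson card_Un_le le_trans add_le_mono order_refl)
  finally have "degree E u \<le> card (?I - {u}) + 4"
    using cv cw by linarith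
  moreover have "card (?I - {u}) < card ?I"
    using u fin by (intro psubset_card_mono) auto
  ultimately show ?thesis
    by linarith
qed simp

lemma sum_card_common_neighbours_le:
  assumes sg: "simple_graph_on V E" and tf: "\<not> contains_copy V E (T3_vertices n) (T3_edges n)"
    and n: "n \<ge> 6" and dv: "degree E v = n - 4"
    and W: "finite W" "W \<inter> insert v (neighbours E v) = {}"
  shows "(\<Sum>w\<in>W. card (neighbours E v \<inter> neighbours E w)) \<le> 2 * (n - 4)"
proof -
  have "(\<Sum>w\<in>W. card (neighbours E v \<inter> neighbours E w))
      = (\<Sum>u\<in>neighbours E v. card (neighbours E u \<inter> W))"
    using sum_card_neighbours_Int_commute[OF W(1) finite_neighbours[OF sg]]
    by (simp add: Int_commute)
  also have "\<dots> \<le> (\<Sum>u\<in>neighbours E v. 2)"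
  proof (rule sum_mono)
    fix u assume u: "u \<in> neighbours E v"
    have "card (neighbours E u \<inter> W) \<le> card (neighbours E u - insert v (neighbours E v))"
      using W(2) finite_neighbours[OF sg] by (intro card_mono) auto
    moreover have "card (neighbours E u - insert v (neighbours E v)) \<le> 2"
    proof (cases "degree E u \<ge> 4")
      case True
      then show ?thesis
        using T3_free_card_neighbours_outside[OF sg tf n u _ True subset_refl] dv by simp
    next
      case False
      then show ?thesis
        using card_neighbours_outside_less_degree[OF sg u insertI1, of "neighbours E v"] by simp
    qed
    ultimately show "card (neighbours E u \<inter> W) \<le> 2"
      by linarith
  qed
  also have "\<dots> = 2 * (n - 4)"
    using dv by (simp add: degree_def)
  finally show ?thesis .
qed

lemma deficiency_ge_if_sparse_common_neighbourhood:
  assumes sg: "simple_graph_on V E" and tf: "\<not> contains_copy V E (T3_vertices n) (T3_edges n)"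
    and n: "n \<ge> 6" and D: "\<forall>u\<in>V. degree E u \<le> n - 4"
    and dv: "degree E v = n - 4" and dw: "degree E w = n - 4"
    and vw: "w \<notin> insert v (neighbours E v)"
    and I: "1 \<le> card (neighbours E v \<inter> neighbours E w)"
      "card (neighbours E v \<inter> neighbours E w) \<le> n - 8"
  shows "2 * int (card V) + int n - 8 \<le> deficiency n E V"
proof -
  define I where "I = neighbours E v \<inter> neighbours E w"
  define t where "t = int (card I)"
  have finV: "finite V"
    using simple_graph_on_finite[OF sg] .
  have IV: "I \<subseteq> V"
    unfolding I_def using neighbours_subset[OF sg] by blast
  have finI: "finite I"
    using finite_subset[OF IV finV] .
  have "int (card (V - I)) * 2 \<le> deficiency n E (V - I)"
    using deficiency_ge_if_degree_le[of "V - I" E "n - 4" n] D n by (simp add: of_nat_diff)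
  moreover have "t * (int n - 5 - t) \<le> deficiency n E I"
  proof -
    have "\<forall>u\<in>I. degree E u \<le> card I + 3"
      using degree_common_neighbour_le[OF sg tf n dv dw vw] unfolding I_def by blast
    then show ?thesis
      using deficiency_ge_if_degree_le[of I E "card I + 3" n] unfolding t_def
      by (simp add: algebra_simps)
  qed
  moreover have "deficiency n E V = deficiency n E (V - I) + deficiency n E I"
    using deficiency_split[OF finV IV] .
  moreover have "int (card (V - I)) = int (card V) - t"
    unfolding t_def using card_Diff_subset[OF finI IV] card_mono[OF finV IV] by simp
  moreover have "0 \<le> (t - 1) * (int n - 8 - t)"
    using I n unfolding t_def I_def by simp
  ultimately show ?thesis
    by (simp add: algebra_simps)
qed

lemma deficiency_ge_middle_range:
  assumes sg: "simple_graph_on V E" and tf: "\<not> contains_copy V E (T3_vertices n) (T3_edges n)"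
    and n: "n \<ge> 10" and D: "\<forall>u\<in>V. degree E u \<le> n - 4" and p: "card V \<le> 2 * n - 7"
  shows "5 * (int (card V) - int n + 1) \<le> deficiency n E V"
proof (cases "\<forall>u\<in>V. degree E u \<le> n - 5")
  case True
  then show ?thesis
    using deficiency_ge_if_degree_le[OF True, of n] n p by (simp add: of_nat_diff)
next
  case False
  then obtain v where v: "v \<in> V" "degree E v = n - 4"
    using D by fastforce
  define Big where "Big = {w \<in> V. degree E w = n - 4}"
  define Far where "Far = Big - insert v (neighbours E v)"
  have finV: "finite V"
    using simple_graph_on_finite[OF sg] .
  have "3 * int (card (V - Big)) \<le> deficiency n E (V - Big)"
    using deficiency_ge_if_degree_le[of "V - Big" E "n - 5" n] D n
    unfolding Big_def by (force simp: of_nat_diff)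
  moreover have "deficiency n E Big = 2 * int (card Big)"
    unfolding deficiency_def Big_def using n by (simp add: of_nat_diff)
  moreover have "Big \<subseteq> V"
    unfolding Big_def by blast
  ultimately have Big_bound: "3 * int (card V) - int (card Big) \<le> deficiency n E V"
    using deficiency_split[OF finV] card_Diff_subset[OF finite_subset[OF _ finV]] card_mono[OF finV]
    by (smt (verit) of_nat_diff)
  show ?thesis
  proof (cases "\<exists>w\<in>Far. card (neighbours E v \<inter> neighbours E w) \<le> n - 8")
    case True
    then obtain w where w: "w \<in> V" "degree E w = n - 4" "w \<notin> insert v (neighbours E v)"
      and sparse: "card (neighbours E v \<inter> neighbours E w) \<le> n - 8"
      unfolding Far_def Big_def by blast
    have "v \<notin> insert w (neighbours E w)"
      using w(3) neighbours_sym by fast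
    then have "insert v (neighbours E v) \<inter> insert w (neighbours E w)
        = neighbours E v \<inter> neighbours E w"
      using w(3) by blast
    moreover have "card (insert v (neighbours E v) \<union> insert w (neighbours E w)) \<le> card V"
      using v(1) w(1) neighbours_subset[OF sg] finV by (intro card_mono) auto
    ultimately have "1 \<le> card (neighbours E v \<inter> neighbours E w)"
      using card_Un_Int[of "insert v (neighbours E v)" "insert w (neighbours E w)"]
        card_closed_neighbourhood[OF sg] finite_neighbours[OF sg] v(2) w(2) p n by simp
    then show ?thesis
      using deficiency_ge_if_sparse_common_neighbourhood[OF sg tf _ D v(2) w(2,3) _ sparse] p n
      by simp
  next
    case False
    have n6: "n \<ge> 6"
      using n by simp
    have finFar: "finite Far"
      unfolding Far_def Big_def using finV by simp
    have "(\<Sum>w\<in>Far. n - 7) \<le> (\<Sum>w\<in>Far. card (neighbours E v \<inter> neighbours E w))"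
    proof (rule sum_mono)
      fix w assume "w \<in> Far"
      then have "\<not> card (neighbours E v \<inter> neighbours E w) \<le> n - 8"
        using False by blast
      then show "n - 7 \<le> card (neighbours E v \<inter> neighbours E w)"
        by linarith
    qed
    then have "card Far * (n - 7) \<le> (\<Sum>w\<in>Far. card (neighbours E v \<inter> neighbours E w))"
      by simp
    also have "\<dots> \<le> 2 * (n - 4)"
      using sum_card_common_neighbours_le[OF sg tf n6 v(2) finFar] unfolding Far_def by blast
    finally have bound: "card Far * (n - 7) \<le> 2 * (n - 4)" .
    have "card Far \<le> 12"
    proof (rule ccontr)
      assume "\<not> card Far \<le> 12"
      then have "13 * (n - 7) \<le> card Far * (n - 7)"
        by (intro mult_le_mono1) simp
      with bound n show False
        by linarith
    qed
    moreover have "card Big \<le> card (insert v (neighbours E v) \<union> Far)"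
      using finFar finite_neighbours[OF sg] by (intro card_mono) (auto simp: Far_def)
    moreover have
      "card (insert v (neighbours E v) \<union> Far) \<le> card (insert v (neighbours E v)) + card Far"
      by (rule card_Un_le)
    ultimately have "card Big \<le> n + 9"
      using card_closed_neighbourhood[OF sg, of v] v(2) n by linarith
    then have "int (card Big) \<le> int n + 9"
      by simp
    moreover have "int (card V) \<le> 2 * int n - 7"
      using p n by (simp add: of_nat_diff)
    ultimately show ?thesis
      using Big_bound by (simp add: algebra_simps)
  qed
qed

lemma min_deficiency_le_deficiency_if_degree_le:
  assumes sg: "simple_graph_on V E" and tf: "\<not> contains_copy V E (T3_vertices n) (T3_edges n)"
    and n: "n \<ge> 10" and D: "\<forall>u\<in>V. degree E u \<le> n - 4"
  shows "int (min_deficiency n (card V)) \<le> deficiency n E V"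
proof -
  let ?p = "card V"
  have "int (2 * ?p) \<le> deficiency n E V"
    using deficiency_ge_if_degree_le[OF D, of n] n by (simp add: of_nat_diff)
  consider "?p < n" | "n \<le> ?p" "?p \<le> 2 * n - 7" | "2 * n - 6 \<le> ?p"
    by linarith
  then show ?thesis
  proof cases
    case 1
    have "\<forall>u\<in>V. degree E u \<le> ?p - 1"
      using degree_less_card[OF sg] by fastforce
    then have "int ?p * (int n - 2 - int (?p - 1)) \<le> deficiency n E V"
      by (rule deficiency_ge_if_degree_le)
    moreover have "int ?p * (int n - 2 - int (?p - 1)) = int (?p * (n - 1 - ?p))"
      using 1 by (cases "?p = 0") (simp_all add: of_nat_diff)
    moreover have "min_deficiency n ?p \<le> ?p * (n - 1 - ?p)"
      using min_deficiency_small[of n ?p] 1 n by simp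
    ultimately show ?thesis
      by (metis of_nat_le_iff order_trans)
  next
    case 2
    then have "min_deficiency n ?p \<le> 5 * (?p - (n - 1))"
      using min_deficiency_middle[of n ?p] n by simp
    moreover have "int (5 * (?p - (n - 1))) = 5 * (int ?p - int n + 1)"
      using 2 n by (simp add: of_nat_diff)
    ultimately have "int (min_deficiency n ?p) \<le> 5 * (int ?p - int n + 1)"
      by (metis of_nat_le_iff)
    also have "\<dots> \<le> deficiency n E V"
      using deficiency_ge_middle_range[OF sg tf n D 2(2)] .
    finally show ?thesis .
  next
    case 3
    then show ?thesis
      using min_deficiency_large[OF n 3] \<open>int (2 * ?p) \<le> deficiency n E V\<close> by linarith
  qed
qed

lemma min_deficiency_le_deficiency:
  assumes "simple_graph_on V E" and "\<not> contains_copy V E (T3_vertices n) (T3_edges n)"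
    and n: "n \<ge> 10"
  shows "int (min_deficiency n (card V)) \<le> deficiency n E V"
  using assms(1,2)
proof (induction "card V" arbitrary: V E rule: less_induct)
  case less
  show ?case
  proof (cases "\<exists>v\<in>V. degree E v \<ge> n - 3")
    case True
    then obtain S where S: "S \<subseteq> V" "S \<noteq> {}"
      and local: "int (min_deficiency n (card S)) \<le> local_deficiency n E S"
      using T3_free_reducible[OF less.prems n] by blast
    have finV: "finite V"
      using simple_graph_on_finite[OF less.prems(1)] .
    have "card (V - S) < card V"
      using S finV by (intro psubset_card_mono) auto
    then have rest:
      "int (min_deficiency n (card (V - S))) \<le> deficiency n (delete_vertices E S) (V - S)"
      using less.prems contains_copy_delete_vertices
      by (intro less.hyps simple_graph_on_delete_vertices) blast+
    have "card V = card S + card (V - S)"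
      using card_Diff_subset[OF finite_subset[OF S(1) finV] S(1)] card_mono[OF finV S(1)] by simp
    then have "min_deficiency n (card V)
        \<le> min_deficiency n (card S) + min_deficiency n (card (V - S))"
      using min_deficiency_add_le[of n "card S" "card (V - S)"] n by simp
    then have "int (min_deficiency n (card V))
        \<le> int (min_deficiency n (card S)) + int (min_deficiency n (card (V - S)))"
      by (metis of_nat_add of_nat_le_iff)
    then show ?thesis
      using local rest deficiency_eq_local_deficiency_plus_rest[OF less.prems(1) S(1), of n]
      by linarith
  next
    case False
    then show ?thesis
      using min_deficiency_le_deficiency_if_degree_le[OF less.prems n] by force
  qed
qed

lemma T3_free_card_edges_le:
  assumes "simple_graph_on V E" and "\<not> contains_copy V E (T3_vertices n) (T3_edges n)"
    and "n \<ge> 10"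
  shows "2 * int (card E) \<le> (int n - 2) * int (card V) - int (min_deficiency n (card V))"
  using min_deficiency_le_deficiency[OF assms] deficiency_eq_card_edges[OF assms(1)]
  by (simp add: algebra_simps)

definition block_cliques :: "nat \<Rightarrow> nat \<Rightarrow> nat set set" where
  "block_cliques m p = {{x, y} | x y. x < p \<and> y < p \<and> x \<noteq> y \<and> x div m = y div m}"

lemma doubleton_in_block_cliques:
  "{x, y} \<in> block_cliques m p \<longleftrightarrow> x < p \<and> y < p \<and> x \<noteq> y \<and> x div m = y div m"
  unfolding block_cliques_def by (auto simp: doubleton_eq_iff)

lemma simple_graph_on_block_cliques: "simple_graph_on {0..<p} (block_cliques m p)"
  unfolding simple_graph_on_def block_cliques_def by auto

lemma div_eq_iff_mem_block:
  fixes y m q :: nat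
  assumes "m > 0"
  shows "y div m = q \<longleftrightarrow> y \<in> {q * m..<q * m + m}"
proof
  assume "y div m = q"
  then show "y \<in> {q * m..<q * m + m}"
    using div_times_less_eq_dividend[of y m] dividend_less_div_times[OF assms, of y] by simp
next
  assume "y \<in> {q * m..<q * m + m}"
  then show "y div m = q"
    by (intro div_nat_eqI) (auto simp: algebra_simps)
qed

lemma neighbours_block_cliques:
  assumes "m > 0" "x < p"
  shows "neighbours (block_cliques m p) x = {x div m * m..<min p (x div m * m + m)} - {x}"
proof -
  have "neighbours (block_cliques m p) x = {y. y < p \<and> y div m = x div m} - {x}"
    unfolding neighbours_def doubleton_in_block_cliques using assms(2) by auto
  also have "{y. y < p \<and> y div m = x div m} = {x div m * m..<min p (x div m * m + m)}"
    unfolding div_eq_iff_mem_block[OF assms(1)] by auto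
  finally show ?thesis .
qed

lemma degree_block_cliques:
  assumes "m > 0" "x < p"
  shows "degree (block_cliques m p) x = min p (x div m * m + m) - x div m * m - 1"
proof -
  have "x \<in> {x div m * m..<min p (x div m * m + m)}"
    using assms div_eq_iff_mem_block[OF assms(1), of x] by auto
  then show ?thesis
    unfolding degree_def neighbours_block_cliques[OF assms] by simp
qed

lemma block_cliques_T3_free:
  assumes n: "n \<ge> 6"
  shows "\<not> contains_copy {0..<p} (block_cliques (n - 1) p) (T3_vertices n) (T3_edges n)"
proof
  let ?m = "n - 1"
  assume "contains_copy {0..<p} (block_cliques ?m p) (T3_vertices n) (T3_edges n)"
  then obtain f where inj: "inj_on f {0..<n}"
    and edges: "\<forall>u v. {u, v} \<in> T3_edges n \<longrightarrow> {f u, f v} \<in> block_cliques ?m p"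
    unfolding contains_copy_def T3_vertices_def by blast
  have same: "f u div ?m = f v div ?m" if "{u, v} \<in> T3_edges n" for u v
    using edges that doubleton_in_block_cliques by blast
  have "{0, 1} \<in> T3_edges n"
    using n unfolding T3_edges_def by auto
  then have f1: "f 1 div ?m = f 0 div ?m"
    using same by force
  have "f i div ?m = f 0 div ?m" if "i < n" for i
  proof -
    have "i = 0 \<or> (1 \<le> i \<and> i \<le> n - 4) \<or> i \<in> {n - 3, n - 2, n - 1}"
      using that by auto
    then consider "i = 0" | "{0, i} \<in> T3_edges n" | "{1, i} \<in> T3_edges n"
      unfolding T3_edges_def by blast
    then show ?thesis
    proof cases
      case 2
      then show ?thesis using same by simp
    next
      case 3
      then show ?thesis using same f1 by simp
    qed simp
  qed
  then have "f ` {0..<n} \<subseteq> {f 0 div ?m * ?m..<f 0 div ?m * ?m + ?m}"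
    using div_eq_iff_mem_block[of ?m] n by auto
  then have "card (f ` {0..<n}) \<le> card {f 0 div ?m * ?m..<f 0 div ?m * ?m + ?m}"
    by (rule card_mono[OF finite_atLeastLessThan])
  then have "card (f ` {0..<n}) \<le> ?m"
    by simp
  moreover have "card (f ` {0..<n}) = n"
    using card_image[OF inj] by simp
  ultimately show False
    using n by simp
qed

lemma card_block_cliques:
  assumes n: "n \<ge> 10" and p: "p = k * (n - 1) + n - 6"
  shows "2 * int (card (block_cliques (n - 1) p)) = (int n - 2) * int p - 5 * (int n - 6)"
proof -
  let ?m = "n - 1" and ?E = "block_cliques (n - 1) p"
  have m: "?m > 0"
    using n by simp
  have "int n - 2 - int (degree ?E x) = (if x < k * ?m then 0 else 5)" if "x < p" for x
  proof (cases "x < k * ?m")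
    case True
    then have "x div ?m < k"
      using m by (simp add: div_less_iff_less_mult)
    then have "Suc (x div ?m) * ?m \<le> k * ?m"
      by (intro mult_le_mono1) simp
    then have "x div ?m * ?m + ?m \<le> k * ?m"
      by (simp add: add.commute)
    then have "x div ?m * ?m + ?m \<le> p"
      using p n by linarith
    then have "degree ?E x = n - 2"
      using degree_block_cliques[OF m that] n by simp
    then show ?thesis
      using True n by simp
  next
    case False
    then have "x div ?m = k"
      using that p n by (intro div_nat_eqI) (auto simp: algebra_simps)
    then have "degree ?E x = n - 7"
      using degree_block_cliques[OF m that] p n by simp
    then show ?thesis
      using False n by simp
  qed
  then have "deficiency n ?E {0..<p} = (\<Sum>x\<in>{0..<p}. if x < k * ?m then 0 else 5)"
    unfolding deficiency_def by (intro sum.cong) auto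
  also have "\<dots> = (\<Sum>x\<in>{0..<k * ?m}. if x < k * ?m then 0 else 5)
      + (\<Sum>x\<in>{k * ?m..<p}. if x < k * ?m then 0 else 5)"
    using p n by (intro sum.atLeastLessThan_concat[symmetric]) auto
  also have "\<dots> = 5 * (int n - 6)"
    using p n by (simp add: of_nat_diff)
  finally show ?thesis
    using deficiency_eq_card_edges[OF simple_graph_on_block_cliques[of p ?m], of n]
    by (simp add: algebra_simps)
qed

lemma ex_eqI:
  assumes "simple_graph_on {0..<p} E0" "\<not> contains_copy {0..<p} E0 VL EL"
    and "\<And>E. simple_graph_on {0..<p} E \<Longrightarrow> \<not> contains_copy {0..<p} E VL EL \<Longrightarrow> card E \<le> card E0"
  shows "ex p VL EL = card E0"
proof -
  let ?A = "{card E | E. simple_graph_on {0..<p} E \<and> \<not> contains_copy {0..<p} E VL EL}"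
  have "?A \<subseteq> card ` Pow (Pow {0..<p})"
    unfolding simple_graph_on_def by blast
  then have "finite ?A"
    by (rule finite_subset) simp
  then show ?thesis
    unfolding ex_def using assms by (intro Max_eqI) auto
qed

theorem theorem4p3:
  fixes p n k :: nat
  assumes "n \<ge> 10" and "p \<ge> n" and "k \<ge> 1" and "p = k * (n - 1) + n - 6"
  shows "real (ex p (T3_vertices n) (T3_edges n)) = (real (n - 2) * real p - 5 * real (n - 6)) / 2"
proof -
  note n = assms(1) and p = assms(4)
  let ?W = "block_cliques (n - 1) p"
  have extremal: "2 * int (card ?W) = (int n - 2) * int p - 5 * (int n - 6)"
    using card_block_cliques[OF n p] .
  have "card E \<le> card ?W"
    if "simple_graph_on {0..<p} E" "\<not> contains_copy {0..<p} E (T3_vertices n) (T3_edges n)" for E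
    using T3_free_card_edges_le[OF that n] min_deficiency_residue[of n k] extremal n p
    by (simp add: of_nat_diff)
  then have "ex p (T3_vertices n) (T3_edges n) = card ?W"
    using simple_graph_on_block_cliques block_cliques_T3_free n by (intro ex_eqI) auto
  moreover have "2 * real (card ?W) = real (n - 2) * real p - 5 * real (n - 6)"
    using arg_cong[OF extremal, of real_of_int] n by (simp add: of_nat_diff)
  ultimately show ?thesis
    by simp
qed

end
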